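(* Suppose $\lceil N/M\rceil\ge e$ and the target gain $g$ satisfies $7\le g\le \frac{(N/M)^2}{3\log(N/M)}$, and let $K$ be a large multiple of $K'=\lceil N/M\rceil\,3g\log(N/M)$. Partition the $K$ users into groups of $K'$ users each; use the new placement scheme for all users, and apply the modified (pull-down) delivery scheme with parameter $g$ separately within each group (transmissions for a group use only the demands and caches of that group's users), with $F=O\big(\binom{K'}{g}(\log\binom{K'}{g})^2\lceil N/M\rceil\big)\approx O\big((N/M)^{g+1}(3e)^g(\log(N/M))^{g+2}g^2\big)$ packets per file. Then for every demand pattern, the expected total normalized number of transmissions required for all users is at most $\frac43\frac{K}{g+1}(1+o(1))$, the expectation being over the randomness of placement and delivery.
   Context: Setting: a server holds a library of $N$ files ($N>K'$), each split into $F$ packets (packet $f$ of file $n$ denoted $(n,f)$); $K$ users each have a cache of size $M$ files ($M\le N$). For a cache configuration, $S_{n,f}$ is the set of users whose cache stores packet $(n,f)$. User $k$ requests file $d_k$. New placement scheme: $F=\lceil N/M\rceil F'$ with $F'$ a positive integer; the packets of each file are partitioned into $F'$ groups of $\lceil N/M\rceil$ packets. For every user, file and group, exactly one packet of the group is chosen uniformly at random and stored in the user's cache; all choices are independent. Modified delivery scheme with parameter $g$ applied to a set $U$ of users: (1) Pull-down phase: for every $k\in U$ and packet $f$ with $|S_{d_k,f}\cap U|\ge g+1$, replace (virtually) the storing set by a uniformly random $g$-element subset of it, independently. (2) With these sets (restricted to $U$), for $k\in U$ and $T\subseteq U\setminus\{k\}$ let $V_{k,T}$ be the set of packets of file $d_k$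 whose storing set equals $T$; for every nonempty $\mathcal{S}\subseteq U$ transmit the XOR of the zero-padded vectors $V_{k,\mathcal{S}\setminus\{k\}}$, $k\in\mathcal{S}$. The normalized number of transmissions for $U$ is $\sum_{\emptyset\ne\mathcal{S}\subseteq U}\max_{k\in\mathcal{S}}|V_{k,\mathcal{S}\setminus\{k\}}|/F$; the total is the sum over the groups. The $o(1)$ term tends to $0$ as the group size $K'$ grows. *)

theory Defs
  imports "HOL-Probability.Probability"
begin

text \<open>Users are 0..<K, files 0..<N, packets of a file 0..<F with
  F = q * F' and q = ceil(N/M). Packet f lies in packet-group (f div q) and has
  position (f mod q) inside it. A placement is a function c with c(k,n,j) in 0..<q
  the position of the packet of group j of file n that user k caches.\<close>

definition qq :: "real \<Rightarrow> real \<Rightarrow> nat" where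
  "qq N M = nat \<lceil>N / M\<rceil>"

definition Kgrp :: "real \<Rightarrow> real \<Rightarrow> nat \<Rightarrow> nat" where
  "Kgrp N M g = nat \<lceil>real (qq N M) * 3 * real g * ln (N / M)\<rceil>"

definition placement_pmf :: "nat \<Rightarrow> nat \<Rightarrow> nat \<Rightarrow> nat \<Rightarrow> (nat \<times> nat \<times> nat \<Rightarrow> nat) pmf" where
  "placement_pmf K N q F' = Pi_pmf ({..<K} \<times> {..<N} \<times> {..<F'}) 0 (\<lambda>_. pmf_of_set {..<q})"

definition storing :: "(nat \<times> nat \<times> nat \<Rightarrow> nat) \<Rightarrow> nat \<Rightarrow> nat \<Rightarrow> nat \<Rightarrow> nat \<Rightarrow> nat set" where
  "storing c q K n f = {k \<in> {..<K}. c (k, n, f div q) = f mod q}"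

definition grp :: "nat \<Rightarrow> nat \<Rightarrow> nat set" where
  "grp Kp k = {(k div Kp) * Kp ..< (k div Kp) * Kp + Kp}"

definition pulldown_pmf :: "nat \<Rightarrow> nat \<Rightarrow> nat \<Rightarrow> nat \<Rightarrow> nat \<Rightarrow> (nat \<Rightarrow> nat)
    \<Rightarrow> (nat \<times> nat \<times> nat \<Rightarrow> nat) \<Rightarrow> (nat \<times> nat \<Rightarrow> nat set) pmf" where
  "pulldown_pmf K Kp q F' g d c =
     Pi_pmf ({..<K} \<times> {..<q * F'}) {}
       (\<lambda>(k, f). let A = storing c q K (d k) f \<inter> grp Kp k in
          if k \<notin> A \<and> g + 1 \<le> card A then pmf_of_set {T. T \<subseteq> A \<and> card T = g}
          else return_pmf A)"

definition Vset :: "nat \<Rightarrow> nat \<Rightarrow> nat \<Rightarrow> (nat \<Rightarrow> nat) \<Rightarrow> (nat \<times> nat \<times> nat \<Rightarrow> nat)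
    \<Rightarrow> (nat \<times> nat \<Rightarrow> nat set) \<Rightarrow> nat \<Rightarrow> nat set \<Rightarrow> nat set" where
  "Vset K q F' d c P k T = {f \<in> {..<q * F'}. k \<notin> storing c q K (d k) f \<and> P (k, f) = T}"

definition group_cost :: "nat \<Rightarrow> nat \<Rightarrow> nat \<Rightarrow> (nat \<Rightarrow> nat) \<Rightarrow> (nat \<times> nat \<times> nat \<Rightarrow> nat)
    \<Rightarrow> (nat \<times> nat \<Rightarrow> nat set) \<Rightarrow> nat set \<Rightarrow> real" where
  "group_cost K q F' d c P U =
     (\<Sum>Ss \<in> Pow U - {{}}. real (Max ((\<lambda>k. card (Vset K q F' d c P k (Ss - {k}))) ` Ss)))
       / real (q * F')"

definition total_cost :: "nat \<Rightarrow> nat \<Rightarrow> nat \<Rightarrow> nat \<Rightarrow> (nat \<Rightarrow> nat) \<Rightarrow> (nat \<times> nat \<times> nat \<Rightarrow> nat)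
    \<Rightarrow> (nat \<times> nat \<Rightarrow> nat set) \<Rightarrow> real" where
  "total_cost m Kp q F' d c P =
     (\<Sum>i<m. group_cost (m * Kp) q F' d c P {i * Kp ..< i * Kp + Kp})"

definition cost_pmf :: "nat \<Rightarrow> nat \<Rightarrow> nat \<Rightarrow> nat \<Rightarrow> nat \<Rightarrow> nat \<Rightarrow> (nat \<Rightarrow> nat) \<Rightarrow> real pmf" where
  "cost_pmf N m Kp q F' g d =
     bind_pmf (placement_pmf (m * Kp) N q F') (\<lambda>c.
       bind_pmf (pulldown_pmf (m * Kp) Kp q F' g d c) (\<lambda>P.
         return_pmf (total_cost m Kp q F' d c P)))"

definition expected_cost :: "nat \<Rightarrow> nat \<Rightarrow> nat \<Rightarrow> nat \<Rightarrow> nat \<Rightarrow> nat \<Rightarrow> (nat \<Rightarrow> nat) \<Rightarrow> real" where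
  "expected_cost N m Kp q F' g d = measure_pmf.expectation (cost_pmf N m Kp q F' g d) (\<lambda>x. x)"

end

theory Submission
  imports Defs
begin

text \<open>Within one group of K' users, a set of g+1 users is served by one transmission of length
  max_k |V_{k,S-{k}}|. After the pull-down, a packet of user k that at least g other group members
  cache is attributed to a uniformly random g-subset of them, so for every g-set T the mean of
  |V_{k,T}| is at most F(1 - 1/q)/binom(K'-1, g). Distinct packets of one packet group are cached
  by disjoint sets of users and distinct packet groups are independent, hence |V_{k,T}| has
  variance at most its mean. The bound  max x_k \<le> \<mu> + t/2 + \<Sum>(x_k - E x_k)^2/(2t)  with
  t = \<mu>/10 then makes the expected contribution of the (g+1)-sets at most 1.1 K'/(g+1).
  Packets cached by fewer than g group members are charged one transmission each; since
  K' \<ge> 3gq, a Chernoff-type estimate bounds their expected number by K'F/(5(g+1)).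
  With F' = 100 (g+1) binom(K'-1, g) the expected cost per group is at most 1.3 K'/(g+1), so the
  bound 4/3 K/(g+1) holds for every multiple K of K', without the (1 + o(1)) slack.\<close>

lemma expectation_bind_pmf_finite:
  fixes f :: "'b \<Rightarrow> real"
  assumes fin: "finite (set_pmf M)" and finN: "\<And>x. x \<in> set_pmf M \<Longrightarrow> finite (set_pmf (N x))"
  shows "measure_pmf.expectation (bind_pmf M N) f =
         measure_pmf.expectation M (\<lambda>x. measure_pmf.expectation (N x) f)"
proof -
  define S where "S = (\<Union>x\<in>set_pmf M. set_pmf (N x))"
  have finS: "finite S" using fin finN by (auto simp: S_def)
  have "measure_pmf.expectation (bind_pmf M N) f = (\<Sum>y\<in>S. pmf (bind_pmf M N) y *\<^sub>R f y)"
    by (rule integral_measure_pmf[OF finS]) (auto simp: S_def)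
  also have "\<dots> = (\<Sum>y\<in>S. (\<Sum>x\<in>set_pmf M. pmf M x *\<^sub>R pmf (N x) y) * f y)"
  proof (intro sum.cong refl)
    fix y
    have "pmf (bind_pmf M N) y = (\<Sum>x\<in>set_pmf M. pmf M x *\<^sub>R pmf (N x) y)"
      unfolding pmf_bind by (rule integral_measure_pmf[OF fin]) auto
    then show "pmf (bind_pmf M N) y *\<^sub>R f y = (\<Sum>x\<in>set_pmf M. pmf M x *\<^sub>R pmf (N x) y) * f y"
      by simp
  qed
  also have "\<dots> = (\<Sum>x\<in>set_pmf M. pmf M x * (\<Sum>y\<in>S. pmf (N x) y * f y))"
    by (simp add: sum_distrib_left sum_distrib_right mult.assoc sum.swap[of _ S])
  also have "\<dots> = (\<Sum>x\<in>set_pmf M. pmf M x *\<^sub>R measure_pmf.expectation (N x) f)"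
  proof (intro sum.cong refl)
    fix x assume x: "x \<in> set_pmf M"
    have "measure_pmf.expectation (N x) f = (\<Sum>y\<in>S. pmf (N x) y *\<^sub>R f y)"
      by (rule integral_measure_pmf[OF finS]) (use x in \<open>auto simp: S_def\<close>)
    then show "pmf M x * (\<Sum>y\<in>S. pmf (N x) y * f y) = pmf M x *\<^sub>R measure_pmf.expectation (N x) f"
      by simp
  qed
  also have "\<dots> = measure_pmf.expectation M (\<lambda>x. measure_pmf.expectation (N x) f)"
    by (rule integral_measure_pmf[OF fin, symmetric]) auto
  finally show ?thesis .
qed

lemma expectation_pair_pmf_mult:
  fixes f :: "'a \<Rightarrow> real" and g :: "'b \<Rightarrow> real"
  assumes "finite (set_pmf A)" "finite (set_pmf B)"
  shows "measure_pmf.expectation (pair_pmf A B) (\<lambda>(x, y). f x * g y) =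
         measure_pmf.expectation A f * measure_pmf.expectation B g"
proof -
  have "measure_pmf.expectation (pair_pmf A B) (\<lambda>(x, y). f x * g y) =
     measure_pmf.expectation A
       (\<lambda>x. measure_pmf.expectation (bind_pmf B (\<lambda>y. return_pmf (x, y))) (\<lambda>(x, y). f x * g y))"
    unfolding pair_pmf_def using assms by (subst expectation_bind_pmf_finite) auto
  also have "\<dots> = measure_pmf.expectation A (\<lambda>x. f x * measure_pmf.expectation B g)"
    by (simp add: bind_return_pmf map_pmf_def[symmetric])
  finally show ?thesis by simp
qed

lemma finite_set_Pi_pmf:
  assumes "finite I" "\<And>x. x \<in> I \<Longrightarrow> finite (set_pmf (p x))"
  shows "finite (set_pmf (Pi_pmf I dflt p))"
  using assms by (subst set_Pi_pmf) (auto intro!: finite_PiE_dflt)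

lemma expectation_Pi_pmf_mult_indep:
  fixes \<phi> \<psi> :: "('a \<Rightarrow> 'b) \<Rightarrow> real"
  assumes fin: "finite I" and JI: "J \<subseteq> I" and finp: "\<And>x. x \<in> I \<Longrightarrow> finite (set_pmf (p x))"
    and dep\<phi>: "\<And>h h'. \<forall>x\<in>J. h x = h' x \<Longrightarrow> \<phi> h = \<phi> h'"
    and dep\<psi>: "\<And>h h'. \<forall>x\<in>I - J. h x = h' x \<Longrightarrow> \<psi> h = \<psi> h'"
  shows "measure_pmf.expectation (Pi_pmf I dflt p) (\<lambda>h. \<phi> h * \<psi> h) =
         measure_pmf.expectation (Pi_pmf I dflt p) \<phi> * measure_pmf.expectation (Pi_pmf I dflt p) \<psi>"
proof -
  define merge :: "('a \<Rightarrow> 'b) \<times> ('a \<Rightarrow> 'b) \<Rightarrow> 'a \<Rightarrow> 'b" where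
    "merge = (\<lambda>(f, g) x. if x \<in> J then f x else g x)"
  define Q where "Q = pair_pmf (Pi_pmf J dflt p) (Pi_pmf (I - J) dflt p)"
  have finJ: "finite J" using fin JI finite_subset by blast
  have "Pi_pmf I dflt p = Pi_pmf (J \<union> (I - J)) dflt p" using JI by (simp add: Un_absorb1)
  also have "\<dots> = map_pmf merge Q" unfolding merge_def Q_def
    by (rule Pi_pmf_union) (use finJ fin in auto)
  finally have split: "Pi_pmf I dflt p = map_pmf merge Q" .
  have \<phi>_merge: "\<phi> (merge ab) = \<phi> (fst ab)" for ab
    by (rule dep\<phi>) (auto simp: merge_def split: prod.splits)
  have \<psi>_merge: "\<psi> (merge ab) = \<psi> (snd ab)" for ab
    by (rule dep\<psi>) (auto simp: merge_def split: prod.splits)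
  have Q_mult: "measure_pmf.expectation Q (\<lambda>(a, b). u a * v b) =
     measure_pmf.expectation (Pi_pmf J dflt p) u * measure_pmf.expectation (Pi_pmf (I - J) dflt p) v"
    for u v :: "('a \<Rightarrow> 'b) \<Rightarrow> real"
    unfolding Q_def using finJ fin JI finp
    by (intro expectation_pair_pmf_mult finite_set_Pi_pmf) auto
  have "measure_pmf.expectation (Pi_pmf I dflt p) \<phi> = measure_pmf.expectation Q (\<lambda>(a, b). \<phi> a * 1)"
    by (simp add: split \<phi>_merge case_prod_unfold)
  moreover have "measure_pmf.expectation (Pi_pmf I dflt p) \<psi> = measure_pmf.expectation Q (\<lambda>(a, b). 1 * \<psi> b)"
    by (simp add: split \<psi>_merge case_prod_unfold)
  moreover have "measure_pmf.expectation (Pi_pmf I dflt p) (\<lambda>h. \<phi> h * \<psi> h)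
      = measure_pmf.expectation Q (\<lambda>(a, b). \<phi> a * \<psi> b)"
    by (simp add: split \<phi>_merge \<psi>_merge case_prod_unfold)
  ultimately show ?thesis by (simp only: Q_mult) simp
qed

lemma expectation_of_bool_eq: "measure_pmf.expectation p (\<lambda>x. of_bool (x = a)) = pmf p a"
  by (subst integral_measure_pmf[of "{a}"]) auto

lemma measure_Pi_pmf_cylinder:
  assumes fin: "finite I" and ZI: "Z \<subseteq> I"
  shows "measure_pmf.prob (Pi_pmf I dflt p) {h. \<forall>x\<in>Z. h x \<in> S x} =
         (\<Prod>x\<in>Z. measure_pmf.prob (p x) (S x))"
proof -
  have "{h. \<forall>x\<in>Z. h x \<in> S x} = Pi I (\<lambda>x. if x \<in> Z then S x else UNIV)"
    using ZI by (auto simp: Pi_def)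
  then have "measure_pmf.prob (Pi_pmf I dflt p) {h. \<forall>x\<in>Z. h x \<in> S x} =
       (\<Prod>x\<in>I. measure_pmf.prob (p x) (if x \<in> Z then S x else UNIV))"
    using measure_Pi_pmf_Pi[OF fin] by simp
  also have "\<dots> = (\<Prod>x\<in>I. if x \<in> Z then measure_pmf.prob (p x) (S x) else 1)"
    by (intro prod.cong) auto
  also have "\<dots> = (\<Prod>x\<in>Z. measure_pmf.prob (p x) (S x))"
    using ZI fin by (simp add: prod.If_cases Int_absorb1)
  finally show ?thesis .
qed

lemma sum_Pow_by_card:
  fixes \<phi> :: "nat \<Rightarrow> real"
  assumes "finite S"
  shows "(\<Sum>C\<in>Pow S. \<phi> (card C)) = (\<Sum>i\<le>card S. real (card S choose i) * \<phi> i)"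
proof -
  have "(\<Sum>C\<in>Pow S. \<phi> (card C)) = (\<Sum>i\<le>card S. \<Sum>C\<in>{C\<in>Pow S. card C = i}. \<phi> (card C))"
    by (rule sum.group[symmetric]) (use assms in \<open>auto intro: card_mono\<close>)
  also have "\<dots> = (\<Sum>i\<le>card S. real (card S choose i) * \<phi> i)"
  proof (intro sum.cong refl)
    fix i
    have "{C\<in>Pow S. card C = i} = {C. C \<subseteq> S \<and> card C = i}" by auto
    then show "(\<Sum>C\<in>{C\<in>Pow S. card C = i}. \<phi> (card C)) = real (card S choose i) * \<phi> i"
      using n_subsets[OF assms] by simp
  qed
  finally show ?thesis .
qed

lemma sum_Pow_supersets_by_card:
  fixes \<phi> :: "nat \<Rightarrow> real"
  assumes finW: "finite W" and TW: "T \<subseteq> W"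
  shows "(\<Sum>B\<in>Pow W. of_bool (T \<subseteq> B) * \<phi> (card B)) =
         (\<Sum>i\<le>card W - card T. real ((card W - card T) choose i) * \<phi> (card T + i))"
proof -
  have finT: "finite T" using finW TW finite_subset by blast
  have supersets: "{B \<in> Pow W. T \<subseteq> B} = (\<lambda>C. T \<union> C) ` Pow (W - T)"
  proof
    show "{B \<in> Pow W. T \<subseteq> B} \<subseteq> (\<lambda>C. T \<union> C) ` Pow (W - T)"
    proof
      fix B assume "B \<in> {B \<in> Pow W. T \<subseteq> B}"
      then have "B = T \<union> (B - T)" "B - T \<in> Pow (W - T)" by auto
      then show "B \<in> (\<lambda>C. T \<union> C) ` Pow (W - T)" by blast
    qed
  qed (use TW in auto)
  have "(\<Sum>B\<in>Pow W. of_bool (T \<subseteq> B) * \<phi> (card B)) = (\<Sum>B\<in>{B \<in> Pow W. T \<subseteq> B}. \<phi> (card B))"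
    using finW by (simp add: sum.inter_filter) (rule sum.cong; auto)
  also have "\<dots> = (\<Sum>B\<in>(\<lambda>C. T \<union> C) ` Pow (W - T). \<phi> (card B))"
    by (simp only: supersets)
  also have "\<dots> = (\<Sum>C\<in>Pow (W - T). \<phi> (card T + card C))"
  proof (rule sum.reindex_cong[where l = "\<lambda>C. T \<union> C"])
    show "inj_on (\<lambda>C. T \<union> C) (Pow (W - T))" by (rule inj_onI) blast
    show "\<phi> (card (T \<union> C)) = \<phi> (card T + card C)" if "C \<in> Pow (W - T)" for C
      using that finT finW finite_subset by (subst card_Un_disjoint) auto
  qed simp
  also have "\<dots> = (\<Sum>i\<le>card W - card T. real ((card W - card T) choose i) * \<phi> (card T + i))"
    using sum_Pow_by_card[of "W - T" "\<lambda>j. \<phi> (card T + j)"] finW TW finT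
    by (simp add: card_Diff_subset)
  finally show ?thesis .
qed

lemma sum_Pow_card_less_le:
  fixes p :: real
  assumes finU: "finite U" and p: "0 \<le> p" "p \<le> 1"
  shows "(\<Sum>B\<in>Pow U. of_bool (card B < g) * (p ^ card B * (1 - p) ^ (card U - card B)))
         \<le> 2 ^ g * (1 - p / 2) ^ card U"
proof -
  define n where "n = card U"
  have "(\<Sum>B\<in>Pow U. of_bool (card B < g) * (p ^ card B * (1 - p) ^ (n - card B)))
      = (\<Sum>i\<le>n. real (n choose i) * (of_bool (i < g) * (p ^ i * (1 - p) ^ (n - i))))"
    unfolding n_def by (rule sum_Pow_by_card[OF finU])
  also have "\<dots> \<le> (\<Sum>i\<le>n. 2 ^ g * (real (n choose i) * (p / 2) ^ i * (1 - p) ^ (n - i)))"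
  proof (intro sum_mono)
    fix i
    have "of_bool (i < g) * p ^ i \<le> 2 ^ g * (p / 2) ^ i"
    proof (cases "i < g")
      case True
      have "p ^ i = 2 ^ i * (p / 2) ^ i" by (simp add: power_divide)
      also have "\<dots> \<le> 2 ^ g * (p / 2) ^ i" using True p by (intro mult_right_mono power_increasing) auto
      finally show ?thesis using True by simp
    qed (use p in simp)
    then have "of_bool (i < g) * p ^ i * (real (n choose i) * (1 - p) ^ (n - i))
        \<le> 2 ^ g * (p / 2) ^ i * (real (n choose i) * (1 - p) ^ (n - i))"
      using p by (intro mult_right_mono) auto
    then show "real (n choose i) * (of_bool (i < g) * (p ^ i * (1 - p) ^ (n - i)))
        \<le> 2 ^ g * (real (n choose i) * (p / 2) ^ i * (1 - p) ^ (n - i))"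
      by (simp add: algebra_simps)
  qed
  also have "\<dots> = 2 ^ g * (p / 2 + (1 - p)) ^ n"
    by (subst binomial_ring) (simp add: sum_distrib_left mult.assoc)
  finally show ?thesis by (simp add: n_def)
qed

lemma sum_Pow_pick_subset_le:
  fixes p :: real
  assumes finW: "finite W" and TW: "T \<subseteq> W" and cT: "card T = g" and p: "0 \<le> p" "p \<le> 1"
  shows "(\<Sum>B\<in>Pow W. of_bool (T \<subseteq> B) / real (card B choose g)
            * (p ^ card B * (1 - p) ^ (Suc (card W) - card B)))
         \<le> (1 - p) / real (card W choose g)"
proof -
  define w where "w = card W"
  define s where "s = w - g"
  have gw: "g \<le> w" using TW finW cT card_mono w_def by blast
  define \<phi> where "\<phi> j = p ^ j * (1 - p) ^ (Suc w - j) / real (j choose g)" for j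
  define \<beta> where "\<beta> j = real (w choose j) * p ^ j * (1 - p) ^ (w - j)" for j
  have "(\<Sum>B\<in>Pow W. of_bool (T \<subseteq> B) / real (card B choose g)
            * (p ^ card B * (1 - p) ^ (Suc (card W) - card B)))
      = (\<Sum>B\<in>Pow W. of_bool (T \<subseteq> B) * \<phi> (card B))"
    by (simp add: \<phi>_def w_def)
  also have "\<dots> = (\<Sum>i\<le>s. real (s choose i) * \<phi> (g + i))"
    using sum_Pow_supersets_by_card[OF finW TW, of \<phi>] by (simp add: cT s_def w_def)
  also have "\<dots> = (\<Sum>i\<le>s. (1 - p) / real (w choose g) * \<beta> (g + i))"
  proof (intro sum.cong refl)
    fix i assume "i \<in> {..s}"
    then have i: "g + i \<le> w" using gw by (auto simp: s_def)
    have "real (s choose i) * real (w choose g) = real (w choose (g + i)) * real ((g + i) choose g)"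
      using choose_mult[of g "g + i" w] i by (simp add: s_def flip: of_nat_mult)
    then have ratio: "real (s choose i) / real ((g + i) choose g) = real (w choose (g + i)) / real (w choose g)"
      using gw by (simp add: frac_eq_eq)
    have "(1 - p) ^ (Suc w - (g + i)) = (1 - p) * (1 - p) ^ (w - (g + i))"
      using i by (simp add: Suc_diff_le)
    then have "real (s choose i) * \<phi> (g + i)
        = real (s choose i) / real ((g + i) choose g) * (p ^ (g + i) * ((1 - p) * (1 - p) ^ (w - (g + i))))"
      by (simp add: \<phi>_def)
    also have "\<dots> = (1 - p) / real (w choose g) * \<beta> (g + i)"
      by (simp add: ratio \<beta>_def field_simps)
    finally show "real (s choose i) * \<phi> (g + i) = (1 - p) / real (w choose g) * \<beta> (g + i)" .
  qed
  also have "\<dots> = (1 - p) / real (w choose g) * (\<Sum>j\<in>(+) g ` {..s}. \<beta> j)"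
    by (simp add: sum_distrib_left sum.reindex)
  also have "\<dots> \<le> (1 - p) / real (w choose g) * 1"
  proof (intro mult_left_mono)
    have "(\<Sum>j\<in>(+) g ` {..s}. \<beta> j) \<le> (\<Sum>j\<le>w. \<beta> j)"
      using p gw by (intro sum_mono2) (auto simp: s_def \<beta>_def)
    also have "\<dots> = 1"
      using binomial_ring[of p "1 - p" w] by (simp add: \<beta>_def)
    finally show "(\<Sum>j\<in>(+) g ` {..s}. \<beta> j) \<le> 1" .
  qed (use p in simp)
  finally show ?thesis by (simp add: w_def)
qed

lemma real_Max_image_le:
  assumes "finite S" "S \<noteq> {}" "\<And>k. k \<in> S \<Longrightarrow> real (\<phi> k) \<le> b"
  shows "real (Max (\<phi> ` S)) \<le> b"
proof -
  have "Max (\<phi> ` S) \<in> \<phi> ` S" using assms by (intro Max_in) auto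
  then show ?thesis using assms(3) by auto
qed

text \<open>AM-GM on the excess of x over its mean e; summed over the users of a set it bounds their
  maximum by \<mu> + t/2 plus the squared deviations over 2t.\<close>
lemma le_mean_add_sq_deviation:
  fixes x e \<mu> t s :: real
  assumes "e \<le> \<mu>" "0 < t" "0 \<le> s"
  shows "x \<le> \<mu> + t / 2 + ((x - e)\<^sup>2 + s) / (2 * t)"
proof (cases "x \<le> \<mu>")
  case True
  have "0 \<le> ((x - e)\<^sup>2 + s) / (2 * t)" using assms by simp
  then show ?thesis using True assms by linarith
next
  case False
  have "2 * t * (x - e) \<le> t\<^sup>2 + (x - e)\<^sup>2"
    using sum_squares_ge_zero[of "x - e - t" 0] by (simp add: power2_eq_square algebra_simps)
  then have "x - e \<le> t / 2 + (x - e)\<^sup>2 / (2 * t)" using assms(2)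
    by (simp add: field_simps power2_eq_square)
  moreover have "(x - e)\<^sup>2 / (2 * t) \<le> ((x - e)\<^sup>2 + s) / (2 * t)"
    using assms by (intro divide_right_mono) auto
  ultimately show ?thesis using assms(1) False by simp
qed

lemma five_mult_Suc_le_two_power: "7 \<le> g \<Longrightarrow> 5 * (g + 1) \<le> (2::nat) ^ g"
  by (induction g rule: dec_induct) simp_all

lemma four_le_exp_three_halves: "4 \<le> exp (3 / 2 :: real)"
proof -
  have "(9 / 8 :: real) ^ 12 \<le> exp (1 / 8) ^ 12"
    using exp_ge_add_one_self[of "1 / 8 :: real"] by (intro power_mono) auto
  also have "exp (1 / 8 :: real) ^ 12 = exp (3 / 2)" by (simp flip: exp_of_nat_mult)
  finally show ?thesis by (simp add: power_divide)
qed

lemma binomial_tail_small: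
  fixes q Kp g :: nat
  assumes g: "7 \<le> g" and q: "1 \<le> q" and Kq: "3 * real g * real q \<le> real Kp"
  shows "real (g + 1) * (2 ^ g * (1 - 1 / real q / 2) ^ Kp) \<le> 1 / 5"
proof -
  define x where "x = 1 / real q / 2"
  have x: "0 \<le> x" "x \<le> 1" "3 / 2 * real g \<le> real Kp * x"
    using q Kq by (auto simp: x_def field_simps)
  have "(1 - x) ^ Kp \<le> exp (- x) ^ Kp"
    using exp_ge_add_one_self[of "- x"] x by (intro power_mono) auto
  also have "\<dots> = exp (- (real Kp * x))" by (simp flip: exp_of_nat_mult)
  also have "\<dots> \<le> exp (- (3 / 2 * real g))" using x by simp
  also have "\<dots> = inverse (exp (3 / 2) ^ g)"
    by (simp add: exp_minus mult.commute flip: exp_of_nat_mult)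
  also have "\<dots> \<le> inverse (4 ^ g)"
    using four_le_exp_three_halves by (intro le_imp_inverse_le power_mono) auto
  finally have "2 ^ g * (1 - x) ^ Kp \<le> 2 ^ g * inverse (4 ^ g)" by (simp add: mult_left_mono)
  also have "(2::real) ^ g * inverse (4 ^ g) = inverse (2 ^ g)"
    by (simp add: field_simps flip: power_mult_distrib)
  finally have "real (g + 1) * (2 ^ g * (1 - x) ^ Kp) \<le> real (g + 1) / 2 ^ g"
    by (simp add: mult_left_mono divide_inverse)
  also have "\<dots> \<le> 1 / 5"
  proof -
    have "real (5 * (g + 1)) \<le> real ((2::nat) ^ g)"
      using five_mult_Suc_le_two_power[OF g] by (simp only: of_nat_le_iff)
    then show ?thesis by (simp add: field_simps)
  qed
  finally show ?thesis by (simp add: x_def)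
qed

lemma finite_set_pmf_subset_choice:
  assumes "finite A" "b \<Longrightarrow> g \<le> card A"
  shows "finite (set_pmf (if b then pmf_of_set {T. T \<subseteq> A \<and> card T = g} else return_pmf A))"
proof (cases b)
  case True
  then obtain T where "T \<subseteq> A" "card T = g" using assms(2) by (meson obtain_subset_with_card_n)
  then have "{T. T \<subseteq> A \<and> card T = g} \<noteq> {}" by blast
  then show ?thesis using True assms(1) by (simp add: set_pmf_of_set)
qed simp

locale caching_group =
  fixes N m Kp i q F' g :: nat and d :: "nat \<Rightarrow> nat"
  assumes group_less: "i < m" and q_ge_2: "2 \<le> q" and g_pos: "0 < g" and g_less_Kp: "g < Kp"
    and F'_pos: "0 < F'" and demands_less: "\<forall>k < m * Kp. d k < N"
begin

text \<open>In the paper's notation cachers c k f is S_{d_k,f} \<inter> U, and pulldown_set c k f is the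
  distribution of the set that replaces it after the pull-down phase.\<close>
definition "K = m * Kp"
definition "U = {i * Kp ..< i * Kp + Kp}"
definition "F = q * F'"
definition "placement = placement_pmf K N q F'"
definition "pulldown c = pulldown_pmf K Kp q F' g d c"
definition "placed_pulldown = bind_pmf placement (\<lambda>c. map_pmf (\<lambda>P. (c, P)) (pulldown c))"
definition "cachers c k f = {u \<in> U. c (u, d k, f div q) = f mod q}"
definition "pulldown_coord c = (\<lambda>(k, f). let A = storing c q K (d k) f \<inter> grp Kp k in
   if k \<notin> A \<and> g + 1 \<le> card A then pmf_of_set {T. T \<subseteq> A \<and> card T = g} else return_pmf A)"
definition "pulldown_set c k f =
   (if k \<notin> cachers c k f \<and> g + 1 \<le> card (cachers c k f)
    then pmf_of_set {T. T \<subseteq> cachers c k f \<and> card T = g} else return_pmf (cachers c k f))"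

lemma U_subset: "U \<subseteq> {..<K}"
proof
  fix u assume "u \<in> U"
  then have "u < Suc i * Kp" by (simp add: U_def)
  also have "\<dots> \<le> m * Kp" using group_less by (intro mult_right_mono) auto
  finally show "u \<in> {..<K}" by (simp add: K_def)
qed

lemma card_U: "card U = Kp" by (simp add: U_def)

lemma finite_U: "finite U" by (simp add: U_def)

lemma grp_eq_U: "k \<in> U \<Longrightarrow> grp Kp k = U"
proof -
  assume "k \<in> U"
  then have "k div Kp = i" using g_less_Kp by (auto simp: U_def mult.commute intro!: div_nat_eqI)
  then show ?thesis by (simp add: grp_def U_def)
qed

lemma demand_less: "k \<in> U \<Longrightarrow> d k < N"
  using U_subset demands_less by (auto simp: K_def)

lemma F_pos: "0 < F" using q_ge_2 F'_pos by (simp add: F_def)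

lemma packet_group_less: "f < F \<Longrightarrow> f div q < F'"
  using q_ge_2 by (simp add: F_def less_mult_imp_div_less mult.commute)

lemma storing_inter_grp: "k \<in> U \<Longrightarrow> storing c q K (d k) f \<inter> grp Kp k = cachers c k f"
  using U_subset by (auto simp: storing_def grp_eq_U cachers_def)

lemma in_storing_iff: "k \<in> U \<Longrightarrow> k \<in> storing c q K (d k) f \<longleftrightarrow> k \<in> cachers c k f"
  using U_subset by (auto simp: storing_def cachers_def)

lemma finite_cachers: "finite (cachers c k f)" using finite_U by (simp add: cachers_def)

lemma finite_placement: "finite (set_pmf placement)"
  using q_ge_2 unfolding placement_def placement_pmf_def
  by (intro finite_set_Pi_pmf) (auto simp: lessThan_empty_iff)

lemma finite_pulldown_coord: "finite (set_pmf (pulldown_coord c x))"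
  unfolding pulldown_coord_def case_prod_unfold Let_def
  by (intro finite_set_pmf_subset_choice) (auto simp: storing_def)

lemma pulldown_eq: "pulldown c = Pi_pmf ({..<K} \<times> {..<F}) {} (pulldown_coord c)"
  by (simp add: pulldown_def pulldown_pmf_def pulldown_coord_def F_def)

lemma finite_pulldown: "finite (set_pmf (pulldown c))"
  unfolding pulldown_eq by (intro finite_set_Pi_pmf finite_pulldown_coord) auto

lemma finite_placed_pulldown: "finite (set_pmf placed_pulldown)"
  using finite_placement finite_pulldown by (simp add: placed_pulldown_def)

lemma integrable_placed_pulldown [simp]: "integrable placed_pulldown (h :: _ \<Rightarrow> real)"
  by (rule integrable_measure_pmf_finite[OF finite_placed_pulldown])

lemma integrable_placement [simp]: "integrable placement (h :: _ \<Rightarrow> real)"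
  by (rule integrable_measure_pmf_finite[OF finite_placement])

lemma expectation_placed_pulldown:
  "measure_pmf.expectation placed_pulldown (h :: _ \<Rightarrow> real) =
   measure_pmf.expectation placement (\<lambda>c. measure_pmf.expectation (pulldown c) (\<lambda>P. h (c, P)))"
  unfolding placed_pulldown_def
  by (subst expectation_bind_pmf_finite) (auto simp: finite_placement finite_pulldown)

lemma pulldown_component:
  assumes "k \<in> U" "f < F"
  shows "map_pmf (\<lambda>P. P (k, f)) (pulldown c) = pulldown_set c k f"
proof -
  have "pulldown_coord c (k, f) = pulldown_set c k f"
    by (simp only: pulldown_coord_def pulldown_set_def Let_def prod.case storing_inter_grp[OF assms(1)])
  then show ?thesis using assms U_subset unfolding pulldown_eq by (subst Pi_pmf_component) auto
qed

lemma pulldown_value: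
  assumes P: "P \<in> set_pmf (pulldown c)" and k: "k \<in> U" and f: "f < F" and kA: "k \<notin> cachers c k f"
  shows "P (k, f) \<subseteq> cachers c k f \<and>
    (card (P (k, f)) = g \<or> P (k, f) = cachers c k f \<and> card (cachers c k f) < g)"
proof -
  define A where "A = cachers c k f"
  have mem: "P (k, f) \<in> set_pmf (pulldown_set c k f)"
    using P unfolding pulldown_component[OF k f, symmetric] by simp
  show ?thesis
  proof (cases "g + 1 \<le> card A")
    case True
    then have "g \<le> card A" by simp
    then obtain T where "T \<subseteq> A" "card T = g" by (meson obtain_subset_with_card_n)
    then have "{T. T \<subseteq> A \<and> card T = g} \<noteq> {}" by blast
    then show ?thesis
      using mem True kA finite_cachers[of c k f] by (simp add: pulldown_set_def A_def set_pmf_of_set)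
  next
    case False
    then show ?thesis using mem by (simp add: pulldown_set_def A_def) arith
  qed
qed

lemma prob_placement_cachers:
  assumes "n < N" "j < F'" "r < q" "B \<subseteq> U"
  shows "measure_pmf.prob placement {c. {u\<in>U. c (u, n, j) = r} = B} =
         (1 / real q) ^ card B * (1 - 1 / real q) ^ (Kp - card B)"
proof -
  define S where "S = (\<lambda>x::nat \<times> nat \<times> nat. if fst x \<in> B then {r} else - {r})"
  have prob_S: "measure_pmf.prob (pmf_of_set {..<q}) (S (u, n, j)) =
      (if u \<in> B then 1 / real q else 1 - 1 / real q)" for u
  proof -
    have "card ({..<q} \<inter> - {r}) = q - 1" using assms(3) by (simp add: Diff_eq[symmetric])
    then show ?thesis using assms(3) q_ge_2
      by (auto simp: S_def measure_pmf_of_set lessThan_empty_iff Int_absorb1 of_nat_diff field_simps)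
  qed
  have "{c. {u\<in>U. c (u, n, j) = r} = B} = {c. \<forall>x\<in>(\<lambda>u. (u, n, j)) ` U. c x \<in> S x}"
    using assms(4) by (auto simp: S_def)
  then have "measure_pmf.prob placement {c. {u\<in>U. c (u, n, j) = r} = B}
      = (\<Prod>x\<in>(\<lambda>u. (u, n, j)) ` U. measure_pmf.prob (pmf_of_set {..<q}) (S x))"
    unfolding placement_def placement_pmf_def
    by (simp only:) (rule measure_Pi_pmf_cylinder, use U_subset assms in \<open>auto simp: K_def\<close>)
  also have "\<dots> = (\<Prod>u\<in>U. if u \<in> B then 1 / real q else 1 - 1 / real q)"
    by (subst prod.reindex) (auto simp: inj_on_def prob_S)
  also have "\<dots> = (1 / real q) ^ card B * (1 - 1 / real q) ^ (Kp - card B)"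
    using assms(4) finite_U card_U finite_subset[OF assms(4)]
    by (simp add: prod.If_cases Int_absorb1 Diff_eq[symmetric] card_Diff_subset)
  finally show ?thesis .
qed

lemma expectation_placement_cachers:
  fixes \<psi> :: "nat set \<Rightarrow> real"
  assumes k: "k \<in> U" and f: "f < F"
  shows "measure_pmf.expectation placement (\<lambda>c. \<psi> (cachers c k f)) =
         (\<Sum>B\<in>Pow U. \<psi> B * ((1 / real q) ^ card B * (1 - 1 / real q) ^ (Kp - card B)))"
proof -
  have "\<psi> (cachers c k f) = (\<Sum>B\<in>Pow U. \<psi> B * indicator {c. cachers c k f = B} c)" for c
    using finite_U by (simp add: indicator_def if_distrib sum.delta' cachers_def cong: if_cong)
  then have "measure_pmf.expectation placement (\<lambda>c. \<psi> (cachers c k f)) =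
     (\<Sum>B\<in>Pow U. \<psi> B * measure_pmf.prob placement {c. cachers c k f = B})"
    by (simp add: Bochner_Integration.integral_sum)
  then show ?thesis
    using demand_less[OF k] packet_group_less[OF f] q_ge_2
    by (simp add: cachers_def prob_placement_cachers)
qed

definition "pulldown_prob k T f c = of_bool (k \<notin> cachers c k f) * pmf (pulldown_set c k f) T"

lemma pmf_pulldown_set:
  assumes kA: "k \<notin> cachers c k f" and T: "card T = g"
  shows "pmf (pulldown_set c k f) T =
         of_bool (T \<subseteq> cachers c k f) / real (card (cachers c k f) choose g)"
proof -
  define A where "A = cachers c k f"
  have fA: "finite A" using finite_cachers by (simp add: A_def)
  consider "g + 1 \<le> card A" | "card A = g" | "card A < g" by linarith
  then show ?thesis
  proof cases
    case 1
    then have "g \<le> card A" by simp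
    then obtain T' where "T' \<subseteq> A" "card T' = g" by (meson obtain_subset_with_card_n)
    then have ne: "{T. T \<subseteq> A \<and> card T = g} \<noteq> {}" by blast
    have "pulldown_set c k f = pmf_of_set {T. T \<subseteq> A \<and> card T = g}"
      using 1 kA by (simp add: pulldown_set_def A_def)
    then have "pmf (pulldown_set c k f) T = indicator {T. T \<subseteq> A \<and> card T = g} T / real (card A choose g)"
      using ne fA by (simp add: pmf_of_set n_subsets)
    then show ?thesis using T by (simp add: A_def indicator_def)
  next
    case 2
    then have "T \<subseteq> A \<longleftrightarrow> A = T" using T fA card_subset_eq by blast
    moreover have "pulldown_set c k f = return_pmf A" using 2 by (simp add: pulldown_set_def A_def)
    ultimately show ?thesis using 2 by (simp add: A_def indicator_def)
  next
    case 3
    have "\<not> T \<subseteq> A"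
    proof
      assume "T \<subseteq> A"
      then have "card T \<le> card A" using fA by (rule card_mono[rotated])
      then show False using 3 T by simp
    qed
    moreover have "A \<noteq> T" using 3 T by auto
    moreover have "pulldown_set c k f = return_pmf A" using 3 by (simp add: pulldown_set_def A_def)
    ultimately show ?thesis by (simp add: A_def)
  qed
qed

lemma pulldown_prob_eq:
  "card T = g \<Longrightarrow> pulldown_prob k T f c =
     of_bool (k \<notin> cachers c k f) * (of_bool (T \<subseteq> cachers c k f) / real (card (cachers c k f) choose g))"
  by (cases "k \<in> cachers c k f") (simp_all add: pulldown_prob_def pmf_pulldown_set)

lemma expectation_pulldown_prob_le:
  assumes k: "k \<in> U" and f: "f < F" and T: "T \<subseteq> U - {k}" "card T = g"
  shows "measure_pmf.expectation placement (pulldown_prob k T f)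
         \<le> (1 - 1 / real q) / real ((Kp - 1) choose g)"
proof -
  define p where "p = 1 / real q"
  have p: "0 \<le> p" "p \<le> 1" using q_ge_2 by (auto simp: p_def)
  define W where "W = U - {k}"
  have cW: "card W = Kp - 1" and SW: "Suc (card W) = Kp"
    using k finite_U card_U g_less_Kp by (simp_all add: W_def)
  have "measure_pmf.expectation placement (pulldown_prob k T f) =
     measure_pmf.expectation placement
       (\<lambda>c. (\<lambda>B. of_bool (k \<notin> B) * (of_bool (T \<subseteq> B) / real (card B choose g))) (cachers c k f))"
    by (intro Bochner_Integration.integral_cong refl) (simp add: pulldown_prob_eq[OF T(2)])
  also have "\<dots> = (\<Sum>B\<in>Pow U. of_bool (k \<notin> B) * (of_bool (T \<subseteq> B) / real (card B choose g))
      * (p ^ card B * (1 - p) ^ (Kp - card B)))"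
    unfolding p_def by (rule expectation_placement_cachers[OF k f])
  also have "\<dots> = (\<Sum>B\<in>Pow W. of_bool (T \<subseteq> B) / real (card B choose g)
      * (p ^ card B * (1 - p) ^ (Suc (card W) - card B)))"
  proof (rule sum.mono_neutral_cong_right)
    show "finite (Pow U)" using finite_U by simp
    show "Pow W \<subseteq> Pow U" by (auto simp: W_def)
    show "\<forall>B\<in>Pow U - Pow W. of_bool (k \<notin> B) * (of_bool (T \<subseteq> B) / real (card B choose g))
        * (p ^ card B * (1 - p) ^ (Kp - card B)) = 0"
      by (auto simp: W_def)
  qed (use SW in \<open>auto simp: W_def\<close>)
  also have "\<dots> \<le> (1 - p) / real (card W choose g)"
    using finite_U T p by (intro sum_Pow_pick_subset_le) (auto simp: W_def)
  finally show ?thesis by (simp add: p_def cW)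
qed

lemma prob_few_cachers_le:
  assumes k: "k \<in> U" and f: "f < F"
  shows "measure_pmf.expectation placement (\<lambda>c. of_bool (k \<notin> cachers c k f \<and> card (cachers c k f) < g))
         \<le> 2 ^ g * (1 - 1 / real q / 2) ^ Kp"
proof -
  define p where "p = 1 / real q"
  have p: "0 \<le> p" "p \<le> 1" using q_ge_2 by (auto simp: p_def)
  have "measure_pmf.expectation placement (\<lambda>c. of_bool (k \<notin> cachers c k f \<and> card (cachers c k f) < g))
      = (\<Sum>B\<in>Pow U. of_bool (k \<notin> B \<and> card B < g) * (p ^ card B * (1 - p) ^ (Kp - card B)))"
    unfolding p_def by (rule expectation_placement_cachers[OF k f])
  also have "\<dots> \<le> (\<Sum>B\<in>Pow U. of_bool (card B < g) * (p ^ card B * (1 - p) ^ (card U - card B)))"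
    using p by (intro sum_mono mult_right_mono) (auto simp: card_U)
  also have "\<dots> \<le> 2 ^ g * (1 - p / 2) ^ card U"
    by (rule sum_Pow_card_less_le[OF finite_U p])
  finally show ?thesis by (simp add: p_def card_U)
qed

definition "in_V k T f cp = (of_bool (k \<notin> cachers (fst cp) k f \<and> snd cp (k, f) = T) :: real)"

definition "V_size k T cp = real (card (Vset K q F' d (fst cp) (snd cp) k T))"

lemma V_size_eq_sum: "k \<in> U \<Longrightarrow> V_size k T cp = (\<Sum>f<F. in_V k T f cp)"
proof -
  assume k: "k \<in> U"
  have "Vset K q F' d (fst cp) (snd cp) k T = {..<F} \<inter> {f. k \<notin> cachers (fst cp) k f \<and> snd cp (k, f) = T}"
    by (auto simp: Vset_def F_def in_storing_iff[OF k])
  then show ?thesis by (simp add: V_size_def in_V_def)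
qed

lemma expectation_in_V_given_placement:
  assumes k: "k \<in> U" and f: "f < F"
  shows "measure_pmf.expectation (pulldown c) (\<lambda>P. in_V k T f (c, P)) = pulldown_prob k T f c"
proof -
  have "measure_pmf.expectation (pulldown c) (\<lambda>P. in_V k T f (c, P)) =
        of_bool (k \<notin> cachers c k f) * measure_pmf.expectation (pulldown c) (\<lambda>P. of_bool (P (k, f) = T))"
    by (cases "k \<in> cachers c k f") (simp_all add: in_V_def)
  also have "measure_pmf.expectation (pulldown c) (\<lambda>P. of_bool (P (k, f) = T)) = pmf (pulldown_set c k f) T"
    by (simp flip: pulldown_component[OF k f] expectation_of_bool_eq)
  finally show ?thesis by (simp add: pulldown_prob_def)
qed

lemma expectation_in_V:
  "k \<in> U \<Longrightarrow> f < F \<Longrightarrow>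
   measure_pmf.expectation placed_pulldown (in_V k T f) = measure_pmf.expectation placement (pulldown_prob k T f)"
  by (simp add: expectation_placed_pulldown expectation_in_V_given_placement)

lemma expectation_in_V_mult_given_placement:
  assumes k: "k \<in> U" and f: "f < F" and f': "f' < F" and ff': "f \<noteq> f'"
  shows "measure_pmf.expectation (pulldown c) (\<lambda>P. in_V k T f (c, P) * in_V k T f' (c, P))
         = pulldown_prob k T f c * pulldown_prob k T f' c"
proof -
  have "measure_pmf.expectation (pulldown c) (\<lambda>P. in_V k T f (c, P) * in_V k T f' (c, P)) =
     measure_pmf.expectation (pulldown c) (\<lambda>P. in_V k T f (c, P)) *
     measure_pmf.expectation (pulldown c) (\<lambda>P. in_V k T f' (c, P))"
    unfolding pulldown_eq
  proof (rule expectation_Pi_pmf_mult_indep[where J = "{(k, f)}"])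
    show "{(k, f)} \<subseteq> {..<K} \<times> {..<F}" using k f U_subset by auto
    show "in_V k T f (c, P) = in_V k T f (c, P')" if "\<forall>x\<in>{(k, f)}. P x = P' x" for P P'
      using that by (simp add: in_V_def)
    show "in_V k T f' (c, P) = in_V k T f' (c, P')"
      if "\<forall>x\<in>{..<K} \<times> {..<F} - {(k, f)}. P x = P' x" for P P'
    proof -
      have "(k, f') \<in> {..<K} \<times> {..<F} - {(k, f)}" using k f' ff' U_subset by auto
      then show ?thesis using that by (simp add: in_V_def)
    qed
  qed (simp_all add: finite_pulldown_coord)
  then show ?thesis by (simp add: expectation_in_V_given_placement k f f')
qed

lemma expectation_pulldown_prob_mult:
  assumes k: "k \<in> U" and f: "f < F" and f': "f' < F" and ff': "f div q \<noteq> f' div q"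
  shows "measure_pmf.expectation placement (\<lambda>c. pulldown_prob k T f c * pulldown_prob k T f' c) =
         measure_pmf.expectation placement (pulldown_prob k T f) *
         measure_pmf.expectation placement (pulldown_prob k T f')"
proof -
  have depends: "pulldown_prob k T f c = pulldown_prob k T f c'"
    if "\<forall>u\<in>U. c (u, d k, f div q) = c' (u, d k, f div q)" for c c' f
  proof -
    have "cachers c k f = cachers c' k f" using that by (auto simp: cachers_def)
    then show ?thesis by (simp add: pulldown_prob_def pulldown_set_def)
  qed
  show ?thesis
    unfolding placement_def placement_pmf_def
  proof (rule expectation_Pi_pmf_mult_indep[where J = "{..<K} \<times> {d k} \<times> {f div q}"])
    show "{..<K} \<times> {d k} \<times> {f div q} \<subseteq> {..<K} \<times> {..<N} \<times> {..<F'}"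
      using demand_less[OF k] packet_group_less[OF f] by auto
    show "finite (set_pmf (pmf_of_set {..<q}))" using q_ge_2 by (simp add: lessThan_empty_iff)
    show "pulldown_prob k T f c = pulldown_prob k T f c'"
      if "\<forall>x\<in>{..<K} \<times> {d k} \<times> {f div q}. c x = c' x" for c c'
      using that U_subset by (intro depends) auto
    show "pulldown_prob k T f' c = pulldown_prob k T f' c'"
      if "\<forall>x\<in>{..<K} \<times> {..<N} \<times> {..<F'} - {..<K} \<times> {d k} \<times> {f div q}. c x = c' x" for c c'
      using that U_subset ff' demand_less[OF k] packet_group_less[OF f'] by (intro depends) auto
  qed simp
qed

lemma in_V_mult_same_packet_group:
  assumes P: "P \<in> set_pmf (pulldown c)" and k: "k \<in> U" and f: "f < F" and f': "f' < F"
    and ff': "f \<noteq> f'" "f div q = f' div q" and T: "T \<noteq> {}"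
  shows "in_V k T f (c, P) * in_V k T f' (c, P) = 0"
proof (rule ccontr)
  assume "in_V k T f (c, P) * in_V k T f' (c, P) \<noteq> 0"
  then have V: "k \<notin> cachers c k f" "P (k, f) = T" "k \<notin> cachers c k f'" "P (k, f') = T"
    by (auto simp: in_V_def)
  have "f mod q \<noteq> f' mod q" using ff' by (metis div_mult_mod_eq)
  then have "cachers c k f \<inter> cachers c k f' = {}" using ff'(2) by (auto simp: cachers_def)
  moreover have "T \<subseteq> cachers c k f" "T \<subseteq> cachers c k f'"
    using pulldown_value[OF P k f V(1)] pulldown_value[OF P k f' V(3)] V by simp_all
  ultimately show False using T by blast
qed

lemma expectation_in_V_mult_le:
  assumes k: "k \<in> U" and f: "f < F" and f': "f' < F" and T: "T \<noteq> {}"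
  shows "measure_pmf.expectation placed_pulldown (\<lambda>cp. in_V k T f cp * in_V k T f' cp)
     \<le> of_bool (f = f') * measure_pmf.expectation placed_pulldown (in_V k T f)
       + measure_pmf.expectation placed_pulldown (in_V k T f)
         * measure_pmf.expectation placed_pulldown (in_V k T f')"
proof -
  have nonneg: "0 \<le> measure_pmf.expectation placed_pulldown (in_V k T f')" for f'
    by (rule integral_nonneg_AE) (auto simp: in_V_def)
  consider "f = f'" | "f \<noteq> f'" "f div q = f' div q" | "f div q \<noteq> f' div q" by blast
  then show ?thesis
  proof cases
    case 1
    then have "(\<lambda>cp. in_V k T f cp * in_V k T f' cp) = in_V k T f" by (simp add: in_V_def fun_eq_iff)
    then show ?thesis using 1 nonneg[of f] by simp
  next
    case 2
    have "measure_pmf.expectation placed_pulldown (\<lambda>cp. in_V k T f cp * in_V k T f' cp)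
        = measure_pmf.expectation placement (\<lambda>c. measure_pmf.expectation (pulldown c) (\<lambda>P. 0 :: real))"
      unfolding expectation_placed_pulldown
      by (intro Bochner_Integration.integral_cong refl integral_cong_AE AE_pmfI
          in_V_mult_same_packet_group[OF _ k f f' 2 T]) auto
    then have "measure_pmf.expectation placed_pulldown (\<lambda>cp. in_V k T f cp * in_V k T f' cp) = 0"
      by simp
    then show ?thesis using 2 nonneg[of f] nonneg[of f'] by simp
  next
    case 3
    then have ne: "f \<noteq> f'" by auto
    have "measure_pmf.expectation placed_pulldown (\<lambda>cp. in_V k T f cp * in_V k T f' cp)
        = measure_pmf.expectation placement (\<lambda>c. pulldown_prob k T f c * pulldown_prob k T f' c)"
      by (simp add: expectation_placed_pulldown expectation_in_V_mult_given_placement[OF k f f' ne])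
    also have "\<dots> = measure_pmf.expectation placed_pulldown (in_V k T f)
        * measure_pmf.expectation placed_pulldown (in_V k T f')"
      by (simp only: expectation_pulldown_prob_mult[OF k f f' 3] expectation_in_V[OF k f] expectation_in_V[OF k f'])
    finally show ?thesis using ne by simp
  qed
qed

lemma variance_V_size_le:
  assumes k: "k \<in> U" and T: "T \<noteq> {}"
  shows "measure_pmf.variance placed_pulldown (V_size k T)
         \<le> measure_pmf.expectation placed_pulldown (V_size k T)"
proof -
  define e where "e = measure_pmf.expectation placed_pulldown (V_size k T)"
  define ey where "ey f = measure_pmf.expectation placed_pulldown (in_V k T f)" for f
  have V_sum: "V_size k T = (\<lambda>cp. \<Sum>f<F. in_V k T f cp)" by (simp add: fun_eq_iff V_size_eq_sum[OF k])
  have e_sum: "e = (\<Sum>f<F. ey f)"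
    unfolding e_def ey_def V_sum by (simp add: Bochner_Integration.integral_sum)
  have diag: "(\<Sum>f'<F. of_bool (f = f') * ey f) = ey f" if "f < F" for f
    using that by (subst sum.cong[OF refl, where h = "\<lambda>f'. if f = f' then ey f else 0"]) (auto simp: sum.delta')
  have "measure_pmf.expectation placed_pulldown (\<lambda>cp. (V_size k T cp)\<^sup>2)
      = (\<Sum>f<F. \<Sum>f'<F. measure_pmf.expectation placed_pulldown (\<lambda>cp. in_V k T f cp * in_V k T f' cp))"
    by (simp add: V_size_eq_sum[OF k] power2_eq_square sum_product Bochner_Integration.integral_sum)
  also have "\<dots> \<le> (\<Sum>f<F. \<Sum>f'<F. of_bool (f = f') * ey f + ey f * ey f')"
    unfolding ey_def by (intro sum_mono expectation_in_V_mult_le[OF k _ _ T]) auto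
  also have "\<dots> = e + e\<^sup>2"
    by (simp add: sum.distrib diag e_sum power2_eq_square sum_product)
  finally show ?thesis by (simp add: measure_pmf.variance_eq e_def)
qed

definition "target_sets = {S \<in> Pow U. card S = g + 1}"
definition "other_sets = {S \<in> Pow U. S \<noteq> {} \<and> card S \<noteq> g + 1}"

lemma finite_target_sets: "finite target_sets" using finite_U by (simp add: target_sets_def)

lemma finite_other_sets: "finite other_sets" using finite_U by (simp add: other_sets_def)

lemma target_sets_memD:
  "S \<in> target_sets \<Longrightarrow> k \<in> S \<Longrightarrow> k \<in> U \<and> S - {k} \<subseteq> U - {k} \<and> card (S - {k}) = g"
  using finite_U finite_subset by (auto simp: target_sets_def)

lemma card_target_sets: "card target_sets = Kp choose (g + 1)"
proof -
  have "target_sets = {S. S \<subseteq> U \<and> card S = g + 1}" by (auto simp: target_sets_def)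
  then show ?thesis using n_subsets[OF finite_U] card_U by simp
qed

text \<open>After the pull-down a packet missing at k is attributed to exactly g users unless fewer than
  g group members cache it, so only such packets contribute to sets of size other than g+1.\<close>
lemma sum_other_sets_in_V_le:
  assumes P: "P \<in> set_pmf (pulldown c)" and k: "k \<in> U" and f: "f < F"
  shows "(\<Sum>S\<in>other_sets. of_bool (k \<in> S) * in_V k (S - {k}) f (c, P))
         \<le> of_bool (k \<notin> cachers c k f \<and> card (cachers c k f) < g)"
proof (cases "k \<in> cachers c k f")
  case False
  define T where "T = P (k, f)"
  have T: "T \<subseteq> cachers c k f \<and> (card T = g \<or> T = cachers c k f \<and> card (cachers c k f) < g)"
    using pulldown_value[OF P k f False] by (simp add: T_def)
  have kT: "k \<notin> T" and finT: "finite T" using T False finite_cachers[of c k f] finite_subset by blast+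
  have "(\<Sum>S\<in>other_sets. of_bool (k \<in> S) * in_V k (S - {k}) f (c, P))
      = (\<Sum>S\<in>other_sets. if S = insert k T then 1 else 0)"
  proof (intro sum.cong refl)
    fix S
    have "(k \<in> S \<and> P (k, f) = S - {k}) \<longleftrightarrow> S = insert k T" using kT by (auto simp: T_def)
    then show "of_bool (k \<in> S) * in_V k (S - {k}) f (c, P) = (if S = insert k T then 1 else 0)"
      using False by (auto simp: in_V_def)
  qed
  also have "\<dots> = of_bool (insert k T \<in> other_sets)" using finite_other_sets by simp
  also have "\<dots> \<le> of_bool (k \<notin> cachers c k f \<and> card (cachers c k f) < g)"
    using T False kT finT by (auto simp: other_sets_def)
  finally show ?thesis .
qed (simp add: in_V_def)

lemma sum_other_sets_V_size_le:
  assumes P: "P \<in> set_pmf (pulldown c)"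
  shows "(\<Sum>S\<in>other_sets. \<Sum>k\<in>S. V_size k (S - {k}) (c, P))
         \<le> (\<Sum>k\<in>U. \<Sum>f<F. of_bool (k \<notin> cachers c k f \<and> card (cachers c k f) < g))"
proof -
  have "(\<Sum>S\<in>other_sets. \<Sum>k\<in>S. V_size k (S - {k}) (c, P))
      = (\<Sum>S\<in>other_sets. \<Sum>k\<in>U. of_bool (k \<in> S) * V_size k (S - {k}) (c, P))"
    using finite_U by (intro sum.cong refl sum.mono_neutral_cong_left) (auto simp: other_sets_def)
  also have "\<dots> = (\<Sum>k\<in>U. \<Sum>f<F. \<Sum>S\<in>other_sets. of_bool (k \<in> S) * in_V k (S - {k}) f (c, P))"
    by (subst sum.swap) (simp add: V_size_eq_sum sum_distrib_left sum.swap[of _ other_sets])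
  also have "\<dots> \<le> (\<Sum>k\<in>U. \<Sum>f<F. of_bool (k \<notin> cachers c k f \<and> card (cachers c k f) < g))"
    by (intro sum_mono sum_other_sets_in_V_le[OF P]) auto
  finally show ?thesis .
qed

lemma Max_V_size_target_le:
  assumes S: "S \<in> target_sets" and t: "0 < t" and e: "\<And>k. k \<in> S \<Longrightarrow> e k \<le> \<mu>"
  shows "real (Max ((\<lambda>k. card (Vset K q F' d c P k (S - {k}))) ` S))
         \<le> \<mu> + t / 2 + (\<Sum>k\<in>S. (V_size k (S - {k}) (c, P) - e k)\<^sup>2) / (2 * t)"
proof (rule real_Max_image_le)
  show finS: "finite S" and "S \<noteq> {}" using S finite_U finite_subset by (auto simp: target_sets_def)
  fix k assume k: "k \<in> S"
  have "(\<Sum>k\<in>S. (V_size k (S - {k}) (c, P) - e k)\<^sup>2)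
      = (V_size k (S - {k}) (c, P) - e k)\<^sup>2 + (\<Sum>k'\<in>S - {k}. (V_size k' (S - {k'}) (c, P) - e k')\<^sup>2)"
    using finS k by (subst sum.remove) auto
  moreover have "0 \<le> (\<Sum>k'\<in>S - {k}. (V_size k' (S - {k'}) (c, P) - e k')\<^sup>2)" by (intro sum_nonneg) auto
  ultimately show "real (card (Vset K q F' d c P k (S - {k})))
      \<le> \<mu> + t / 2 + (\<Sum>k\<in>S. (V_size k (S - {k}) (c, P) - e k)\<^sup>2) / (2 * t)"
    using le_mean_add_sq_deviation[OF e[OF k] t] by (simp add: V_size_def)
qed

lemma Max_V_size_other_le:
  assumes "S \<in> other_sets"
  shows "real (Max ((\<lambda>k. card (Vset K q F' d c P k (S - {k}))) ` S)) \<le> (\<Sum>k\<in>S. V_size k (S - {k}) (c, P))"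
proof (rule real_Max_image_le)
  show finS: "finite S" and "S \<noteq> {}" using assms finite_U finite_subset by (auto simp: other_sets_def)
  show "real (card (Vset K q F' d c P k (S - {k}))) \<le> (\<Sum>k\<in>S. V_size k (S - {k}) (c, P))" if "k \<in> S" for k
    using member_le_sum[OF that _ finS, of "\<lambda>k. V_size k (S - {k}) (c, P)"] by (simp add: V_size_def)
qed

lemma group_cost_le:
  assumes P: "P \<in> set_pmf (pulldown c)" and t: "0 < t"
    and e: "\<And>S k. S \<in> target_sets \<Longrightarrow> k \<in> S \<Longrightarrow> e k (S - {k}) \<le> \<mu>"
  shows "group_cost K q F' d c P U \<le>
     ((\<Sum>S\<in>target_sets. \<mu> + t / 2 + (\<Sum>k\<in>S. (V_size k (S - {k}) (c, P) - e k (S - {k}))\<^sup>2) / (2 * t))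
      + (\<Sum>k\<in>U. \<Sum>f<F. of_bool (k \<notin> cachers c k f \<and> card (cachers c k f) < g))) / real F"
proof -
  define Mx where "Mx S = real (Max ((\<lambda>k. card (Vset K q F' d c P k (S - {k}))) ` S))" for S
  have "Pow U - {{}} = target_sets \<union> other_sets" "target_sets \<inter> other_sets = {}"
    by (auto simp: target_sets_def other_sets_def)
  then have "(\<Sum>S\<in>Pow U - {{}}. Mx S) = (\<Sum>S\<in>target_sets. Mx S) + (\<Sum>S\<in>other_sets. Mx S)"
    using finite_target_sets finite_other_sets by (simp add: sum.union_disjoint)
  also have "\<dots> \<le> (\<Sum>S\<in>target_sets. \<mu> + t / 2 + (\<Sum>k\<in>S. (V_size k (S - {k}) (c, P) - e k (S - {k}))\<^sup>2) / (2 * t))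
      + (\<Sum>S\<in>other_sets. \<Sum>k\<in>S. V_size k (S - {k}) (c, P))"
    unfolding Mx_def using e t by (intro add_mono sum_mono Max_V_size_target_le Max_V_size_other_le) auto
  also have "\<dots> \<le> (\<Sum>S\<in>target_sets. \<mu> + t / 2 + (\<Sum>k\<in>S. (V_size k (S - {k}) (c, P) - e k (S - {k}))\<^sup>2) / (2 * t))
      + (\<Sum>k\<in>U. \<Sum>f<F. of_bool (k \<notin> cachers c k f \<and> card (cachers c k f) < g))"
    using sum_other_sets_V_size_le[OF P] by simp
  finally show ?thesis
    using F_pos by (simp add: group_cost_def Mx_def F_def divide_right_mono)
qed

lemma expectation_placed_pulldown_fst:
  "measure_pmf.expectation placed_pulldown (\<lambda>cp. h (fst cp) :: real) = measure_pmf.expectation placement h"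
  by (simp add: expectation_placed_pulldown)

lemma sum_variance_V_size_target_le:
  assumes mean: "\<And>k T. k \<in> U \<Longrightarrow> T \<subseteq> U - {k} \<Longrightarrow> card T = g \<Longrightarrow>
                 measure_pmf.expectation placed_pulldown (V_size k T) \<le> \<mu>"
    and S: "S \<in> target_sets"
  shows "(\<Sum>k\<in>S. measure_pmf.variance placed_pulldown (V_size k (S - {k}))) \<le> real (g + 1) * \<mu>"
proof -
  have "(\<Sum>k\<in>S. measure_pmf.variance placed_pulldown (V_size k (S - {k}))) \<le> (\<Sum>k\<in>S. \<mu>)"
  proof (intro sum_mono order_trans[OF variance_V_size_le])
    fix k assume k: "k \<in> S"
    note Sk = target_sets_memD[OF S k]
    show "k \<in> U" using Sk by blast
    show "S - {k} \<noteq> {}"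
    proof
      assume "S - {k} = {}"
      then have "card (S - {k}) = 0" by (simp only: card.empty)
      then show False using Sk g_pos by simp
    qed
    show "measure_pmf.expectation placed_pulldown (V_size k (S - {k})) \<le> \<mu>" using Sk by (intro mean) auto
  qed
  then show ?thesis using S by (simp add: target_sets_def)
qed

lemma expected_group_cost_le_param:
  assumes t: "0 < t"
    and mean: "\<And>k T. k \<in> U \<Longrightarrow> T \<subseteq> U - {k} \<Longrightarrow> card T = g \<Longrightarrow>
                 measure_pmf.expectation placed_pulldown (V_size k T) \<le> \<mu>"
  shows "measure_pmf.expectation placed_pulldown (\<lambda>cp. group_cost K q F' d (fst cp) (snd cp) U)
     \<le> (real (Kp choose (g + 1)) * (\<mu> + t / 2 + real (g + 1) * \<mu> / (2 * t))
        + real Kp * real F * (2 ^ g * (1 - 1 / real q / 2) ^ Kp)) / real F"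
proof -
  define e where "e k T = measure_pmf.expectation placed_pulldown (V_size k T)" for k T
  define \<beta> where "\<beta> = 2 ^ g * (1 - 1 / real q / 2) ^ Kp"
  define tail where "tail k f c = (of_bool (k \<notin> cachers c k f \<and> card (cachers c k f) < g) :: real)" for k f c
  define Bnd where "Bnd cp = ((\<Sum>S\<in>target_sets. \<mu> + t / 2
      + (\<Sum>k\<in>S. (V_size k (S - {k}) cp - e k (S - {k}))\<^sup>2) / (2 * t))
      + (\<Sum>k\<in>U. \<Sum>f<F. tail k f (fst cp))) / real F" for cp
  have e_le: "e k (S - {k}) \<le> \<mu>" if "S \<in> target_sets" "k \<in> S" for S k
    unfolding e_def using target_sets_memD[OF that] by (intro mean) auto
  have "measure_pmf.expectation placed_pulldown (\<lambda>cp. group_cost K q F' d (fst cp) (snd cp) U)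
      \<le> measure_pmf.expectation placed_pulldown Bnd"
  proof (intro integral_mono_AE AE_pmfI integrable_placed_pulldown)
    fix cp assume "cp \<in> set_pmf placed_pulldown"
    then have "snd cp \<in> set_pmf (pulldown (fst cp))" by (auto simp: placed_pulldown_def)
    from group_cost_le[where e = e and \<mu> = \<mu>, OF this t e_le]
    show "group_cost K q F' d (fst cp) (snd cp) U \<le> Bnd cp" by (simp add: Bnd_def tail_def)
  qed
  also have "\<dots> = ((\<Sum>S\<in>target_sets. \<mu> + t / 2
      + (\<Sum>k\<in>S. measure_pmf.variance placed_pulldown (V_size k (S - {k}))) / (2 * t))
      + (\<Sum>k\<in>U. \<Sum>f<F. measure_pmf.expectation placement (tail k f))) / real F"
    unfolding Bnd_def e_def integral_divide_zero
    by (subst Bochner_Integration.integral_add)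
       (simp_all add: Bochner_Integration.integral_sum expectation_placed_pulldown_fst)
  also have "\<dots> \<le> ((\<Sum>S\<in>target_sets. \<mu> + t / 2 + real (g + 1) * \<mu> / (2 * t))
      + (\<Sum>k\<in>U. \<Sum>f<F. \<beta>)) / real F"
  proof -
    have "(\<Sum>S\<in>target_sets. \<mu> + t / 2
        + (\<Sum>k\<in>S. measure_pmf.variance placed_pulldown (V_size k (S - {k}))) / (2 * t))
        \<le> (\<Sum>S\<in>target_sets. \<mu> + t / 2 + real (g + 1) * \<mu> / (2 * t))"
    proof (rule sum_mono)
      fix S assume "S \<in> target_sets"
      then have "(\<Sum>k\<in>S. measure_pmf.variance placed_pulldown (V_size k (S - {k}))) \<le> real (g + 1) * \<mu>"
        using sum_variance_V_size_target_le[of \<mu> S] mean by blast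
      then show "\<mu> + t / 2 + (\<Sum>k\<in>S. measure_pmf.variance placed_pulldown (V_size k (S - {k}))) / (2 * t)
          \<le> \<mu> + t / 2 + real (g + 1) * \<mu> / (2 * t)"
        using t by (simp add: divide_right_mono)
    qed
    moreover have "(\<Sum>k\<in>U. \<Sum>f<F. measure_pmf.expectation placement (tail k f)) \<le> (\<Sum>k\<in>U. \<Sum>f<F. \<beta>)"
      using prob_few_cachers_le unfolding tail_def \<beta>_def by (intro sum_mono) auto
    ultimately show ?thesis by (intro divide_right_mono add_mono) auto
  qed
  also have "\<dots> = (real (Kp choose (g + 1)) * (\<mu> + t / 2 + real (g + 1) * \<mu> / (2 * t))
        + real Kp * real F * \<beta>) / real F"
    by (simp add: card_target_sets card_U)
  finally show ?thesis by (simp add: \<beta>_def)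
qed


lemma expectation_V_size_le:
  assumes k: "k \<in> U" and T: "T \<subseteq> U - {k}" "card T = g"
  shows "measure_pmf.expectation placed_pulldown (V_size k T)
         \<le> real F * ((1 - 1 / real q) / real ((Kp - 1) choose g))"
proof -
  have "V_size k T = (\<lambda>cp. \<Sum>f<F. in_V k T f cp)" by (simp add: fun_eq_iff V_size_eq_sum[OF k])
  then have "measure_pmf.expectation placed_pulldown (V_size k T)
      = (\<Sum>f<F. measure_pmf.expectation placement (pulldown_prob k T f))"
    by (simp add: Bochner_Integration.integral_sum expectation_in_V[OF k])
  also have "\<dots> \<le> (\<Sum>f<F. (1 - 1 / real q) / real ((Kp - 1) choose g))"
    by (intro sum_mono expectation_pulldown_prob_le[OF k _ T]) auto
  finally show ?thesis by simp
qed

lemma expected_group_cost_le_tail: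
  assumes F': "F' = 100 * (g + 1) * ((Kp - 1) choose g)"
  shows "measure_pmf.expectation placed_pulldown (\<lambda>cp. group_cost K q F' d (fst cp) (snd cp) U)
         \<le> real Kp * (11 / 10 * (1 - 1 / real q) + real (g + 1) * (2 ^ g * (1 - 1 / real q / 2) ^ Kp))
            / real (g + 1)"
proof -
  define B where "B = real ((Kp - 1) choose g)"
  define w where "w = 1 - 1 / real q"
  define \<mu> where "\<mu> = real F * w / B"
  define \<beta> where "\<beta> = 2 ^ g * (1 - 1 / real q / 2) ^ Kp"
  define X where "X = (real (Kp choose (g + 1)) * (11 / 10 * \<mu>) + real Kp * real F * \<beta>) / real F"
  have B: "0 < B" using g_less_Kp by (simp add: B_def)
  have "real F = real q * (100 * real (g + 1) * B)" unfolding F_def by (simp add: F' B_def)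
  then have "\<mu> = 100 * real (g + 1) * (real q - 1)"
    using B q_ge_2 by (simp add: \<mu>_def w_def field_simps)
  then have \<mu>: "100 * real (g + 1) \<le> \<mu>" "0 < \<mu>" using q_ge_2 by simp_all
  have "Kp * ((Kp - 1) choose g) = (Kp choose (g + 1)) * (g + 1)"
    using Suc_times_binomial_eq[of "Kp - 1" g] g_less_Kp by simp
  then have binom: "real (Kp choose (g + 1)) * real (g + 1) = real Kp * B"
    unfolding B_def by (metis of_nat_mult)
  have t_choice: "measure_pmf.expectation placed_pulldown (\<lambda>cp. group_cost K q F' d (fst cp) (snd cp) U)
     \<le> (real (Kp choose (g + 1)) * (\<mu> + \<mu> / 10 / 2 + real (g + 1) * \<mu> / (2 * (\<mu> / 10)))
        + real Kp * real F * \<beta>) / real F"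
    unfolding \<beta>_def
  proof (rule expected_group_cost_le_param)
    show "0 < \<mu> / 10" using \<mu> by simp
    show "measure_pmf.expectation placed_pulldown (V_size k T) \<le> \<mu>"
      if "k \<in> U" "T \<subseteq> U - {k}" "card T = g" for k T
      using expectation_V_size_le[OF that] by (simp add: \<mu>_def B_def w_def)
  qed
  have "real (g + 1) * \<mu> / (2 * (\<mu> / 10)) = 5 * real (g + 1)" using \<mu> by (simp add: field_simps)
  then have "\<mu> + \<mu> / 10 / 2 + real (g + 1) * \<mu> / (2 * (\<mu> / 10)) \<le> 11 / 10 * \<mu>" using \<mu> by simp
  then have bound: "measure_pmf.expectation placed_pulldown (\<lambda>cp. group_cost K q F' d (fst cp) (snd cp) U) \<le> X"
    unfolding X_def by (intro order_trans[OF t_choice] divide_right_mono add_right_mono mult_left_mono) auto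
  have "X * real (g + 1)
      = real (Kp choose (g + 1)) * real (g + 1) * (11 / 10 * \<mu>) / real F + real Kp * (real (g + 1) * \<beta>)"
    using F_pos by (simp add: X_def field_simps)
  then have "X * real (g + 1) \<le> real Kp * (11 / 10 * w + real (g + 1) * \<beta>)"
    unfolding binom using B F_pos by (simp add: \<mu>_def field_simps)
  then have "X \<le> real Kp * (11 / 10 * w + real (g + 1) * \<beta>) / real (g + 1)"
    by (rule iffD2[OF pos_le_divide_eq, rotated]) simp
  with bound show ?thesis unfolding w_def \<beta>_def by linarith
qed

lemma expected_group_cost_le:
  assumes g: "7 \<le> g" and F': "F' = 100 * (g + 1) * ((Kp - 1) choose g)"
    and Kq: "3 * real g * real q \<le> real Kp"
  shows "measure_pmf.expectation placed_pulldown (\<lambda>cp. group_cost K q F' d (fst cp) (snd cp) U)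
         \<le> 4 / 3 * real Kp / real (g + 1)"
proof -
  define s where "s = 11 / 10 * (1 - 1 / real q) + real (g + 1) * (2 ^ g * (1 - 1 / real q / 2) ^ Kp)"
  have "1 \<le> q" "11 / 10 * (1 - 1 / real q) \<le> 11 / 10" using q_ge_2 by simp_all
  then have "s \<le> 4 / 3" using binomial_tail_small[OF g _ Kq] unfolding s_def by linarith
  then have "real Kp * s \<le> 4 / 3 * real Kp" using mult_left_mono[of s "4 / 3" "real Kp"] by simp
  then have "real Kp * s / real (g + 1) \<le> 4 / 3 * real Kp / real (g + 1)" by (intro divide_right_mono) simp_all
  with expected_group_cost_le_tail[OF F'] show ?thesis by (simp add: s_def)
qed

end

lemma expected_cost_le:
  fixes N m Kp q F' g :: nat and d :: "nat \<Rightarrow> nat"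
  assumes m: "1 \<le> m" and q: "2 \<le> q" and g: "7 \<le> g" and gK: "g < Kp"
    and F': "F' = 100 * (g + 1) * ((Kp - 1) choose g)" and Kq: "3 * real g * real q \<le> real Kp"
    and d: "\<forall>k < m * Kp. d k < N"
  shows "expected_cost N m Kp q F' g d \<le> 4 / 3 * real (m * Kp) / real (g + 1)"
proof -
  define J where "J = bind_pmf (placement_pmf (m * Kp) N q F')
    (\<lambda>c. map_pmf (\<lambda>P. (c, P)) (pulldown_pmf (m * Kp) Kp q F' g d c))"
  have group: "caching_group N m Kp i q F' g d" if "i < m" for i
    using that q g gK d by unfold_locales (auto simp: F')
  have group0: "caching_group N m Kp 0 q F' g d" using group m by simp
  have J: "J = caching_group.placed_pulldown N m Kp q F' g d"
    by (simp add: J_def caching_group.placed_pulldown_def[OF group0] caching_group.placement_def[OF group0]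
        caching_group.pulldown_def[OF group0] caching_group.K_def[OF group0])
  have finJ: "finite (set_pmf J)" using caching_group.finite_placed_pulldown[OF group0] J by simp
  have "cost_pmf N m Kp q F' g d = map_pmf (\<lambda>cp. total_cost m Kp q F' d (fst cp) (snd cp)) J"
    unfolding cost_pmf_def J_def map_bind_pmf
    by (intro bind_pmf_cong refl) (simp add: map_pmf_def bind_assoc_pmf bind_return_pmf)
  then have "expected_cost N m Kp q F' g d =
      (\<Sum>i<m. measure_pmf.expectation J
         (\<lambda>cp. group_cost (m * Kp) q F' d (fst cp) (snd cp) {i * Kp ..< i * Kp + Kp}))"
    unfolding expected_cost_def total_cost_def
    by (simp add: Bochner_Integration.integral_sum integrable_measure_pmf_finite[OF finJ])
  also have "\<dots> \<le> (\<Sum>i<m. 4 / 3 * real Kp / real (g + 1))"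
    using caching_group.expected_group_cost_le[OF group g F' Kq]
    by (intro sum_mono) (simp add: J caching_group.K_def[OF group] caching_group.U_def[OF group])
  finally show ?thesis by (simp add: field_simps)
qed

lemma exp_one_gt_two: "2 < exp (1 :: real)"
  using exp_1_gt_powr[of 1] by simp

lemma ln_ratio_ge_one:
  fixes N M :: real
  assumes q: "exp 1 \<le> real (qq N M)" and g: "7 \<le> g" and gr: "real g \<le> (N / M)\<^sup>2 / (3 * ln (N / M))"
  shows "1 \<le> ln (N / M)"
proof (rule ccontr)
  define r where "r = N / M"
  assume "\<not> 1 \<le> ln (N / M)"
  then have "ln r < ln (exp 1)" by (simp add: r_def)
  have "2 < real (nat \<lceil>r\<rceil>)" using q exp_one_gt_two by (simp add: qq_def r_def)
  then have "\<not> nat \<lceil>r\<rceil> \<le> 2" by linarith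
  then have r2: "2 < r" by simp
  with \<open>ln r < ln (exp 1)\<close> have "r < exp 1" by (subst (asm) ln_less_cancel_iff) auto
  then have "r * r < 3 * 3" using exp_le r2 by (intro mult_strict_mono) auto
  moreover have half: "1 / 2 < ln r"
  proof -
    have "ln (1 / r) \<le> 1 / r - 1" using r2 by (intro ln_le_minus_one) simp
    moreover have "ln (1 / r) = - ln r" using r2 by (simp add: ln_div)
    moreover have "1 / r < 1 / 2" using r2 by (simp add: divide_strict_left_mono)
    ultimately show ?thesis by linarith
  qed
  moreover have "real g * (3 * ln r) \<le> r * r"
  proof -
    have "0 < 3 * ln r" using half by simp
    moreover have "real g \<le> r * r / (3 * ln r)" using gr by (simp add: r_def power2_eq_square)
    ultimately show ?thesis by (simp add: pos_le_divide_eq)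
  qed
  moreover have "7 * (3 * ln r) \<le> real g * (3 * ln r)" using g half by (intro mult_right_mono) auto
  ultimately show False by linarith
qed

lemma qq_mult_le_Kgrp:
  fixes N M :: real
  assumes "1 \<le> ln (N / M)"
  shows "3 * real g * real (qq N M) \<le> real (Kgrp N M g)"
proof -
  have "3 * real g * real (qq N M) \<le> real (qq N M) * 3 * real g * ln (N / M)"
    using mult_left_mono[OF assms, of "3 * real g * real (qq N M)"] by (simp add: ac_simps)
  also have "\<dots> \<le> real (Kgrp N M g)" unfolding Kgrp_def by (rule real_nat_ceiling_ge)
  finally show ?thesis .
qed

lemma subpacket_count_le:
  fixes q Kp g :: nat
  assumes g: "7 \<le> g" and K: "2 * g \<le> Kp"
  shows "real (q * (100 * (g + 1) * ((Kp - 1) choose g)))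
         \<le> 100 * real (Kp choose g) * (ln (real (Kp choose g)))\<^sup>2 * real q"
proof -
  have gK: "g \<le> Kp" using K by simp
  have "(2::real) ^ g \<le> (real Kp / real g) ^ g"
    using K g by (intro power_mono) (auto simp: field_simps)
  also have "\<dots> \<le> real (Kp choose g)" by (rule binomial_ge_n_over_k_pow_k[OF gK])
  finally have pow: "(2::real) ^ g \<le> real (Kp choose g)" .
  then have "ln (2 ^ g) \<le> ln (real (Kp choose g))"
    using gK by (subst ln_le_cancel_iff) auto
  then have "real g * (2 / 3) \<le> ln (real (Kp choose g))"
    using ln2_ge_two_thirds mult_left_mono[OF ln2_ge_two_thirds, of "real g"] by (simp add: ln_realpow)
  then have "(real g * (2 / 3))\<^sup>2 \<le> (ln (real (Kp choose g)))\<^sup>2" by (intro power_mono) auto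
  moreover have "real (g + 1) \<le> (real g * (2 / 3))\<^sup>2"
  proof -
    have g7: "7 \<le> real g" using g by simp
    then have "7 * real g \<le> real g * real g" by (intro mult_right_mono) auto
    then have "real g + 1 \<le> 4 / 9 * (real g * real g)" using g7 by linarith
    then show ?thesis by (simp add: power2_eq_square)
  qed
  moreover have "real ((Kp - 1) choose g) \<le> real (Kp choose g)" by (simp add: binomial_right_mono)
  ultimately have "real (g + 1) * real ((Kp - 1) choose g) \<le> (ln (real (Kp choose g)))\<^sup>2 * real (Kp choose g)"
    by (intro mult_mono) auto
  from mult_left_mono[OF this, of "100 * real q"] show ?thesis by (simp add: algebra_simps)
qed

lemma coded_caching_bound:
  fixes N :: nat and M \<epsilon> :: real and g :: nat
  assumes q: "exp 1 \<le> real (qq (real N) M)" and g: "7 \<le> g"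
    and gr: "real g \<le> (real N / M)\<^sup>2 / (3 * ln (real N / M))" and \<epsilon>: "0 \<le> \<epsilon>"
  shows "\<exists>F' > 0.
        real (qq (real N) M * F') \<le>
          100 * real (Kgrp (real N) M g choose g) * (ln (real (Kgrp (real N) M g choose g)))^2
            * real (qq (real N) M) \<and>
        (\<forall>m \<ge> 1. \<forall>d :: nat \<Rightarrow> nat. (\<forall>k < m * Kgrp (real N) M g. d k < N) \<longrightarrow>
           expected_cost N m (Kgrp (real N) M g) (qq (real N) M) F' g d
             \<le> 4 / 3 * real (m * Kgrp (real N) M g) / real (g + 1) * (1 + \<epsilon>))"
proof -
  define Kp where "Kp = Kgrp (real N) M g"
  define F' where "F' = 100 * (g + 1) * ((Kp - 1) choose g)"
  have q3: "3 \<le> qq (real N) M" using q exp_one_gt_two by simp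
  have Kq: "3 * real g * real (qq (real N) M) \<le> real Kp"
    unfolding Kp_def by (rule qq_mult_le_Kgrp[OF ln_ratio_ge_one[OF q g gr]])
  have "3 * real g * 1 \<le> 3 * real g * real (qq (real N) M)" using q3 by (intro mult_left_mono) auto
  then have "real (2 * g) \<le> real Kp" using Kq by simp
  then have K: "2 * g \<le> Kp" by (simp only: of_nat_le_iff)
  have cost: "expected_cost N m Kp (qq (real N) M) F' g d
      \<le> 4 / 3 * real (m * Kp) / real (g + 1) * (1 + \<epsilon>)"
    if "1 \<le> m" "\<forall>k < m * Kp. d k < N" for m d
  proof -
    have "expected_cost N m Kp (qq (real N) M) F' g d \<le> 4 / 3 * real (m * Kp) / real (g + 1)"
      using q3 g K Kq that by (intro expected_cost_le) (auto simp: F'_def)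
    also have "\<dots> \<le> 4 / 3 * real (m * Kp) / real (g + 1) * (1 + \<epsilon>)"
      using mult_left_mono[of 1 "1 + \<epsilon>" "4 / 3 * real (m * Kp) / real (g + 1)"] \<epsilon> by simp
    finally show ?thesis .
  qed
  have "0 < F'" using K by (simp add: F'_def)
  then show ?thesis
    using subpacket_count_le[OF g K] cost unfolding Kp_def[symmetric] F'_def by blast
qed

theorem theorem8:
  shows "\<exists>C > 0. \<forall>\<epsilon> > 0. \<exists>K0. \<forall>(N::nat) (M::real) (g::nat).
     0 < M \<and> M \<le> real N \<and> real (Kgrp (real N) M g) < real N \<and>
     exp 1 \<le> real (qq (real N) M) \<and>
     7 \<le> g \<and> real g \<le> (real N / M)^2 / (3 * ln (real N / M)) \<and>
     K0 \<le> Kgrp (real N) M g \<longrightarrow>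
     (\<exists>F' > 0.
        real (qq (real N) M * F') \<le>
          C * real (Kgrp (real N) M g choose g) * (ln (real (Kgrp (real N) M g choose g)))^2
            * real (qq (real N) M) \<and>
        (\<forall>m \<ge> 1. \<forall>d :: nat \<Rightarrow> nat. (\<forall>k < m * Kgrp (real N) M g. d k < N) \<longrightarrow>
           expected_cost N m (Kgrp (real N) M g) (qq (real N) M) F' g d
             \<le> 4 / 3 * real (m * Kgrp (real N) M g) / real (g + 1) * (1 + \<epsilon>)))"
proof (intro exI[of _ "100::real"] conjI allI impI, goal_cases)
  case 1
  show ?case by simp
next
  case (2 \<epsilon>)
  show ?case
    by (rule exI[of _ 0], intro allI impI, elim conjE, rule coded_caching_bound) (use 2 in auto)
qed

end
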